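(* Let $\otimes$ be a uninorm on $[0,1]$ and $\neg$ a strong negation function. Then $(\otimes,\Phi^{\neg}(\otimes))$ satisfies the rearrangement inequality if and only if $(\otimes,\Phi^{\neg}(\otimes))$ satisfies the dual rearrangement inequality.
   Context: A uninorm is a function $\otimes:[0,1]^2\to[0,1]$ that is commutative, associative, monotonic (for all $x,y,z\in[0,1]$, $x\leq y$ implies $x\otimes z\leq y\otimes z$), and has an identity element $e\in[0,1]$ ($x\otimes e=x$ for all $x$). A negation is a monotonically nonincreasing function $\neg:[0,1]\to[0,1]$ with $\neg(0)=1$, $\neg(1)=0$; it is strong if it is strictly monotone and involutive. For $f:[0,1]^2\to[0,1]$, $\Phi^{\neg}(f)(x,y)=\neg(f(\neg x,\neg y))$. For uninorms $\otimes,\oplus$, the pair $(\otimes,\oplus)$ satisfies the rearrangement inequality if for every $n\geq1$, all $0\leq x_1\leq\cdots\leq x_n\leq 1$, $0\leq y_1\leq\cdots\leq y_n\leq 1$ and every permutation $\sigma$ of $\{1,\dots,n\}$, $$(x_n\otimes y_1)\oplus\cdots\oplus(x_1\otimes y_n)\leq (x_{\sigma(1)}\otimes y_1)\oplus\cdots\oplus(x_{\sigma(n)}\otimes y_n)\leq (x_1\otimes y_1)\oplus\cdots\oplus(x_n\otimes y_n),$$ and satisfies the dual rearrangement inequality if for all such data $$(x_n\oplus y_1)\otimes\cdots\otimes(x_1\oplus y_n)\geq (x_{\sigma(1)}\oplus y_1)\otimes\cdots\otimes(x_{\sigma(n)}\oplus y_n)\geq (x_1\oplus y_1)\otimes\cdots\otimes(x_n\oplus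 y_n).$$ *)

theory Defs
  imports Complex_Main "HOL-Combinatorics.Permutations"
begin

text \<open>Binary operations on the unit interval are modelled as functions real => real => real;
  only their values on [0,1] matter.\<close>

definition uninorm :: "(real \<Rightarrow> real \<Rightarrow> real) \<Rightarrow> bool" where
  "uninorm f \<longleftrightarrow>
     (\<forall>x\<in>{0..1}. \<forall>y\<in>{0..1}. f x y \<in> {0..1}) \<and>
     (\<forall>x\<in>{0..1}. \<forall>y\<in>{0..1}. f x y = f y x) \<and>
     (\<forall>x\<in>{0..1}. \<forall>y\<in>{0..1}. \<forall>z\<in>{0..1}. f (f x y) z = f x (f y z)) \<and>
     (\<forall>x\<in>{0..1}. \<forall>y\<in>{0..1}. \<forall>z\<in>{0..1}. x \<le> y \<longrightarrow> f x z \<le> f y z) \<and>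
     (\<exists>e\<in>{0..1}. \<forall>x\<in>{0..1}. f x e = x)"

definition negation :: "(real \<Rightarrow> real) \<Rightarrow> bool" where
  "negation N \<longleftrightarrow>
     (\<forall>x\<in>{0..1}. N x \<in> {0..1}) \<and>
     (\<forall>x\<in>{0..1}. \<forall>y\<in>{0..1}. x \<le> y \<longrightarrow> N y \<le> N x) \<and>
     N 0 = 1 \<and> N 1 = 0"

definition strong_negation :: "(real \<Rightarrow> real) \<Rightarrow> bool" where
  "strong_negation N \<longleftrightarrow> negation N \<and>
     (\<forall>x\<in>{0..1}. \<forall>y\<in>{0..1}. x < y \<longrightarrow> N y < N x) \<and>
     (\<forall>x\<in>{0..1}. N (N x) = x)"

definition Phi :: "(real \<Rightarrow> real) \<Rightarrow> (real \<Rightarrow> real \<Rightarrow> real) \<Rightarrow> real \<Rightarrow> real \<Rightarrow> real" where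
  "Phi N f x y = N (f (N x) (N y))"

definition bigop :: "(real \<Rightarrow> real \<Rightarrow> real) \<Rightarrow> (nat \<Rightarrow> real) \<Rightarrow> nat \<Rightarrow> real" where
  "bigop op t n = foldl op (t 1) (map t [2..<Suc n])"

definition sorted_unit :: "(nat \<Rightarrow> real) \<Rightarrow> nat \<Rightarrow> bool" where
  "sorted_unit x n \<longleftrightarrow> (\<forall>i\<in>{1..n}. 0 \<le> x i \<and> x i \<le> 1) \<and>
     (\<forall>i j. 1 \<le> i \<longrightarrow> i \<le> j \<longrightarrow> j \<le> n \<longrightarrow> x i \<le> x j)"

definition rearrangement_ineq :: "(real \<Rightarrow> real \<Rightarrow> real) \<Rightarrow> (real \<Rightarrow> real \<Rightarrow> real) \<Rightarrow> bool" where
  "rearrangement_ineq otimes oplus \<longleftrightarrow>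
     (\<forall>n\<ge>1. \<forall>x y \<sigma>. sorted_unit x n \<longrightarrow> sorted_unit y n \<longrightarrow> \<sigma> permutes {1..n} \<longrightarrow>
        bigop oplus (\<lambda>i. otimes (x (n + 1 - i)) (y i)) n
          \<le> bigop oplus (\<lambda>i. otimes (x (\<sigma> i)) (y i)) n \<and>
        bigop oplus (\<lambda>i. otimes (x (\<sigma> i)) (y i)) n
          \<le> bigop oplus (\<lambda>i. otimes (x i) (y i)) n)"

definition dual_rearrangement_ineq :: "(real \<Rightarrow> real \<Rightarrow> real) \<Rightarrow> (real \<Rightarrow> real \<Rightarrow> real) \<Rightarrow> bool" where
  "dual_rearrangement_ineq otimes oplus \<longleftrightarrow>
     (\<forall>n\<ge>1. \<forall>x y \<sigma>. sorted_unit x n \<longrightarrow> sorted_unit y n \<longrightarrow> \<sigma> permutes {1..n} \<longrightarrow>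
        bigop otimes (\<lambda>i. oplus (x (n + 1 - i)) (y i)) n
          \<ge> bigop otimes (\<lambda>i. oplus (x (\<sigma> i)) (y i)) n \<and>
        bigop otimes (\<lambda>i. oplus (x (\<sigma> i)) (y i)) n
          \<ge> bigop otimes (\<lambda>i. oplus (x i) (y i)) n)"

end

theory Submission
  imports Defs
begin

(* The strong negation N is an order-reversing involution of [0,1] exchanging U and
   V = Phi N U: N (U a b) = V (N a) (N b) and N (V a b) = U (N a) (N b).  For sorted x, y
   the reflected sequences x' i = N (x (n + 1 - i)), y' i = N (y (n + 1 - i)) are sorted
   again, and N maps the aggregate of x', y' paired along the conjugate
   i \<mapsto> n + 1 - \<sigma> (n + 1 - i) of a permutation \<sigma> to the dual aggregate of x, y paired
   along \<sigma>; the reversal of the order of aggregation this entails is harmless by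
   commutativity and associativity.  The conjugation fixes the identity and the order
   reversal, and N reverses inequalities, so each of the two inequalities for (U, V)
   transfers to the other. *)

definition unit_closed :: "(real \<Rightarrow> real \<Rightarrow> real) \<Rightarrow> bool" where
  "unit_closed f \<longleftrightarrow> (\<forall>x\<in>{0..1}. \<forall>y\<in>{0..1}. f x y \<in> {0..1})"

definition unit_comm_semigroup :: "(real \<Rightarrow> real \<Rightarrow> real) \<Rightarrow> bool" where
  "unit_comm_semigroup f \<longleftrightarrow> unit_closed f \<and>
     (\<forall>x\<in>{0..1}. \<forall>y\<in>{0..1}. f x y = f y x) \<and>
     (\<forall>x\<in>{0..1}. \<forall>y\<in>{0..1}. \<forall>z\<in>{0..1}. f (f x y) z = f x (f y z))"

lemma unit_closedD: "unit_closed f \<Longrightarrow> x \<in> {0..1} \<Longrightarrow> y \<in> {0..1} \<Longrightarrow> f x y \<in> {0..1}"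
  unfolding unit_closed_def by blast

lemma unit_comm_semigroup_closed: "unit_comm_semigroup f \<Longrightarrow> unit_closed f"
  unfolding unit_comm_semigroup_def by blast

lemma unit_comm_semigroup_commute:
  "unit_comm_semigroup f \<Longrightarrow> x \<in> {0..1} \<Longrightarrow> y \<in> {0..1} \<Longrightarrow> f x y = f y x"
  unfolding unit_comm_semigroup_def by blast

lemma unit_comm_semigroup_assoc:
  "unit_comm_semigroup f \<Longrightarrow> x \<in> {0..1} \<Longrightarrow> y \<in> {0..1} \<Longrightarrow> z \<in> {0..1} \<Longrightarrow>
    f (f x y) z = f x (f y z)"
  unfolding unit_comm_semigroup_def by blast

lemma unit_comm_semigroup_uninorm: "uninorm f \<Longrightarrow> unit_comm_semigroup f"
  unfolding uninorm_def unit_comm_semigroup_def unit_closed_def by blast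

lemma bigop_one [simp]: "bigop f t (Suc 0) = t (Suc 0)"
  by (simp add: bigop_def)

lemma bigop_Suc: "n \<ge> 1 \<Longrightarrow> bigop f t (Suc n) = f (bigop f t n) (t (Suc n))"
  by (simp add: bigop_def)

lemma bigop_cong:
  assumes "\<And>i. i \<in> {1..n} \<Longrightarrow> s i = t i" "n \<ge> 1"
  shows "bigop f s n = bigop f t n"
  using assms(2,1) by (induction n rule: nat_induct_at_least) (simp_all add: bigop_Suc)

lemma bigop_closed:
  assumes f: "unit_closed f" and "\<And>i. i \<in> {1..n} \<Longrightarrow> t i \<in> {0..1}" and "n \<ge> 1"
  shows "bigop f t n \<in> {0..1}"
  using assms(3,2)
proof (induction n rule: nat_induct_at_least)
  case (Suc n)
  then have "bigop f t n \<in> {0..1}" "t (Suc n) \<in> {0..1}" by auto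
  then show ?case using Suc.hyps by (simp only: bigop_Suc unit_closedD[OF f])
qed auto

lemma bigop_hom:
  assumes f: "unit_closed f"
    and h: "\<forall>x\<in>{0..1}. \<forall>y\<in>{0..1}. h (f x y) = g (h x) (h y)"
    and "\<And>i. i \<in> {1..n} \<Longrightarrow> t i \<in> {0..1}" and "n \<ge> 1"
  shows "h (bigop f t n) = bigop g (\<lambda>i. h (t i)) n"
  using assms(4,3)
proof (induction n rule: nat_induct_at_least)
  case (Suc n)
  have "bigop f t n \<in> {0..1}" by (rule bigop_closed[OF f]) (use Suc in auto)
  moreover have "t (Suc n) \<in> {0..1}" using Suc by auto
  ultimately show ?case using Suc h by (simp add: bigop_Suc)
qed simp

lemma bigop_Suc_left:
  assumes f: "unit_comm_semigroup f"
    and "\<And>i. i \<in> {1..Suc n} \<Longrightarrow> t i \<in> {0..1}" and "n \<ge> 1"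
  shows "bigop f t (Suc n) = f (t 1) (bigop f (\<lambda>i. t (Suc i)) n)"
  using assms(3,2)
proof (induction n rule: nat_induct_at_least)
  case base
  then show ?case by (simp add: bigop_Suc)
next
  case (Suc n)
  have "bigop f (\<lambda>i. t (Suc i)) n \<in> {0..1}"
    by (rule bigop_closed[OF unit_comm_semigroup_closed[OF f]]) (use Suc in auto)
  then have assoc: "f (f (t 1) (bigop f (\<lambda>i. t (Suc i)) n)) (t (Suc (Suc n)))
      = f (t 1) (f (bigop f (\<lambda>i. t (Suc i)) n) (t (Suc (Suc n))))"
    using Suc.prems by (intro unit_comm_semigroup_assoc[OF f]) auto
  have "bigop f t (Suc (Suc n)) = f (bigop f t (Suc n)) (t (Suc (Suc n)))"
    using Suc.hyps by (simp add: bigop_Suc)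
  also have "\<dots> = f (f (t 1) (bigop f (\<lambda>i. t (Suc i)) n)) (t (Suc (Suc n)))"
    using Suc by simp
  also have "\<dots> = f (t 1) (bigop f (\<lambda>i. t (Suc i)) (Suc n))"
    using Suc.hyps by (simp only: assoc bigop_Suc)
  finally show ?case .
qed

definition reflection :: "nat \<Rightarrow> nat \<Rightarrow> nat" where
  "reflection n i = (if i \<in> {1..n} then Suc n - i else i)"

lemma reflection_in_range: "i \<in> {1..n} \<Longrightarrow> reflection n i \<in> {1..n}"
  by (auto simp: reflection_def)

lemma reflection_reflection [simp]: "reflection n (reflection n i) = i"
  by (cases "i \<in> {1..n}") (auto simp: reflection_def)

lemma reflection_permutes: "reflection n permutes {1..n}"
  by (rule bij_imp_permutes)
    (auto simp: reflection_def intro!: bij_betw_byWitness[where f'="reflection n"])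

lemma bigop_reflection:
  assumes f: "unit_comm_semigroup f"
    and "\<And>i. i \<in> {1..n} \<Longrightarrow> t i \<in> {0..1}" and "n \<ge> 1"
  shows "bigop f (\<lambda>i. t (reflection n i)) n = bigop f t n"
  using assms(3,2)
proof (induction n rule: nat_induct_at_least)
  case base
  then show ?case by (simp add: reflection_def)
next
  case (Suc n)
  have t_reflection: "t (reflection (Suc n) i) \<in> {0..1}" if "i \<in> {1..Suc n}" for i
    using Suc.prems reflection_in_range[OF that] by blast
  have "t (Suc n) \<in> {0..1}" using Suc by auto
  moreover have "bigop f t n \<in> {0..1}"
    by (rule bigop_closed[OF unit_comm_semigroup_closed[OF f]]) (use Suc in auto)
  ultimately have comm: "f (t (Suc n)) (bigop f t n) = f (bigop f t n) (t (Suc n))"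
    by (rule unit_comm_semigroup_commute[OF f])
  have "bigop f (\<lambda>i. t (reflection (Suc n) i)) (Suc n)
      = f (t (Suc n)) (bigop f (\<lambda>i. t (reflection (Suc n) (Suc i))) n)"
    using bigop_Suc_left[OF f t_reflection Suc.hyps] by (simp add: reflection_def)
  also have "bigop f (\<lambda>i. t (reflection (Suc n) (Suc i))) n = bigop f (\<lambda>i. t (reflection n i)) n"
    using Suc.hyps by (intro bigop_cong) (auto simp: reflection_def)
  also have "\<dots> = bigop f t n"
    using Suc by simp
  finally show ?case
    using comm Suc.hyps by (simp add: bigop_Suc)
qed

lemma negation_closed: "negation N \<Longrightarrow> a \<in> {0..1} \<Longrightarrow> N a \<in> {0..1}"
  unfolding negation_def by blast

lemma negation_antitone:
  "negation N \<Longrightarrow> a \<in> {0..1} \<Longrightarrow> b \<in> {0..1} \<Longrightarrow> a \<le> b \<Longrightarrow> N b \<le> N a"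
  unfolding negation_def by blast

lemma sorted_unit_in_unit: "sorted_unit x n \<Longrightarrow> i \<in> {1..n} \<Longrightarrow> x i \<in> {0..1}"
  unfolding sorted_unit_def by simp

lemma sorted_unit_mono: "sorted_unit x n \<Longrightarrow> 1 \<le> i \<Longrightarrow> i \<le> j \<Longrightarrow> j \<le> n \<Longrightarrow> x i \<le> x j"
  unfolding sorted_unit_def by blast

lemma sorted_unit_negation_reflection:
  assumes N: "negation N" and x: "sorted_unit x n"
  shows "sorted_unit (\<lambda>i. N (x (reflection n i))) n"
  unfolding sorted_unit_def
proof (intro conjI allI impI ballI)
  fix i assume "i \<in> {1..n}"
  then have "N (x (reflection n i)) \<in> {0..1}"
    by (intro negation_closed[OF N] sorted_unit_in_unit[OF x] reflection_in_range)
  then show "0 \<le> N (x (reflection n i))" "N (x (reflection n i)) \<le> 1" by simp_all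
next
  fix i j :: nat assume ij: "1 \<le> i" "i \<le> j" "j \<le> n"
  have "Suc n - j \<in> {1..n}" "Suc n - i \<in> {1..n}" using ij by auto
  then have "x (Suc n - j) \<in> {0..1}" "x (Suc n - i) \<in> {0..1}"
    using sorted_unit_in_unit[OF x] by blast+
  moreover have "x (Suc n - j) \<le> x (Suc n - i)"
    using ij by (intro sorted_unit_mono[OF x]) auto
  ultimately have "N (x (Suc n - i)) \<le> N (x (Suc n - j))"
    by (rule negation_antitone[OF N])
  then show "N (x (reflection n i)) \<le> N (x (reflection n j))"
    using ij by (simp add: reflection_def)
qed

definition paired_bigop :: "(real \<Rightarrow> real \<Rightarrow> real) \<Rightarrow> (real \<Rightarrow> real \<Rightarrow> real) \<Rightarrow>
    (nat \<Rightarrow> real) \<Rightarrow> (nat \<Rightarrow> real) \<Rightarrow> (nat \<Rightarrow> nat) \<Rightarrow> nat \<Rightarrow> real" where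
  "paired_bigop outer inner x y \<sigma> n = bigop outer (\<lambda>i. inner (x (\<sigma> i)) (y i)) n"

lemma paired_bigop_closed:
  assumes "unit_closed outer" "unit_closed inner"
    and x: "sorted_unit x n" and y: "sorted_unit y n" and \<sigma>: "\<sigma> permutes {1..n}" and "n \<ge> 1"
  shows "paired_bigop outer inner x y \<sigma> n \<in> {0..1}"
  unfolding paired_bigop_def
proof (rule bigop_closed[OF assms(1) _ assms(6)])
  fix i assume i: "i \<in> {1..n}"
  then have "\<sigma> i \<in> {1..n}" by (rule permutes_in_image[OF \<sigma>, THEN iffD2])
  then show "inner (x (\<sigma> i)) (y i) \<in> {0..1}"
    by (intro unit_closedD[OF assms(2)] sorted_unit_in_unit[OF x] sorted_unit_in_unit[OF y i])
qed

lemma negation_paired_bigop: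
  assumes A: "unit_comm_semigroup A" and B: "unit_closed B"
    and N: "negation N" and N_inv: "\<forall>a\<in>{0..1}. N (N a) = a"
    and NA: "\<forall>a\<in>{0..1}. \<forall>b\<in>{0..1}. N (A a b) = A' (N a) (N b)"
    and NB: "\<forall>a\<in>{0..1}. \<forall>b\<in>{0..1}. N (B a b) = B' (N a) (N b)"
    and x: "sorted_unit x n" and y: "sorted_unit y n" and \<sigma>: "\<sigma> permutes {1..n}" and n: "n \<ge> 1"
  shows "N (paired_bigop A B (\<lambda>i. N (x (reflection n i))) (\<lambda>i. N (y (reflection n i)))
            (\<lambda>i. reflection n (\<sigma> (reflection n i))) n)
       = paired_bigop A' B' x y \<sigma> n"
proof -
  define t where "t i = B (N (x (\<sigma> i))) (N (y i))" for i
  have xy: "x (\<sigma> i) \<in> {0..1}" "y i \<in> {0..1}" if "i \<in> {1..n}" for i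
    by (rule sorted_unit_in_unit[OF x permutes_in_image[OF \<sigma>, THEN iffD2, OF that]],
        rule sorted_unit_in_unit[OF y that])
  have t: "t i \<in> {0..1}" if "i \<in> {1..n}" for i
    unfolding t_def using xy[OF that] by (intro unit_closedD[OF B] negation_closed[OF N])
  have "paired_bigop A B (\<lambda>i. N (x (reflection n i))) (\<lambda>i. N (y (reflection n i)))
          (\<lambda>i. reflection n (\<sigma> (reflection n i))) n = bigop A (\<lambda>i. t (reflection n i)) n"
    unfolding paired_bigop_def t_def by simp
  also have "\<dots> = bigop A t n"
    by (rule bigop_reflection[OF A t n])
  finally have "N (paired_bigop A B (\<lambda>i. N (x (reflection n i))) (\<lambda>i. N (y (reflection n i)))
          (\<lambda>i. reflection n (\<sigma> (reflection n i))) n) = bigop A' (\<lambda>i. N (t i)) n"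
    using bigop_hom[OF unit_comm_semigroup_closed[OF A] NA t n] by simp
  also have "\<dots> = paired_bigop A' B' x y \<sigma> n"
    unfolding paired_bigop_def
    by (rule bigop_cong[OF _ n]) (use NB N_inv xy negation_closed[OF N] in \<open>simp add: t_def\<close>)
  finally show ?thesis .
qed

definition rearrangement :: "(real \<Rightarrow> real \<Rightarrow> bool) \<Rightarrow>
    (real \<Rightarrow> real \<Rightarrow> real) \<Rightarrow> (real \<Rightarrow> real \<Rightarrow> real) \<Rightarrow> bool" where
  "rearrangement le outer inner \<longleftrightarrow>
    (\<forall>n\<ge>1. \<forall>x y \<sigma>. sorted_unit x n \<longrightarrow> sorted_unit y n \<longrightarrow> \<sigma> permutes {1..n} \<longrightarrow>
       le (paired_bigop outer inner x y (reflection n) n) (paired_bigop outer inner x y \<sigma> n) \<and>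
       le (paired_bigop outer inner x y \<sigma> n) (paired_bigop outer inner x y id n))"

lemma bigop_reflection_eq:
  "n \<ge> 1 \<Longrightarrow> bigop outer (\<lambda>i. inner (x (reflection n i)) (y i)) n
    = bigop outer (\<lambda>i. inner (x (n + 1 - i)) (y i)) n"
  by (rule bigop_cong) (auto simp: reflection_def)

lemma rearrangement_ineq_iff:
  "rearrangement_ineq otimes oplus \<longleftrightarrow> rearrangement (\<le>) oplus otimes"
  unfolding rearrangement_ineq_def rearrangement_def paired_bigop_def
  by (simp add: bigop_reflection_eq cong: imp_cong)

lemma dual_rearrangement_ineq_iff:
  "dual_rearrangement_ineq otimes oplus \<longleftrightarrow> rearrangement (\<ge>) otimes oplus"
  unfolding dual_rearrangement_ineq_def rearrangement_def paired_bigop_def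
  by (simp add: bigop_reflection_eq cong: imp_cong)

lemma rearrangement_negation:
  assumes A: "unit_comm_semigroup A" and B: "unit_closed B"
    and N: "negation N" and N_inv: "\<forall>a\<in>{0..1}. N (N a) = a"
    and NA: "\<forall>a\<in>{0..1}. \<forall>b\<in>{0..1}. N (A a b) = A' (N a) (N b)"
    and NB: "\<forall>a\<in>{0..1}. \<forall>b\<in>{0..1}. N (B a b) = B' (N a) (N b)"
    and le: "\<And>p q. p \<in> {0..1} \<Longrightarrow> q \<in> {0..1} \<Longrightarrow> le p q \<Longrightarrow> le' (N p) (N q)"
    and R: "rearrangement le A B"
  shows "rearrangement le' A' B'"
  unfolding rearrangement_def
proof (intro allI impI)
  fix n x y \<sigma>
  assume n: "n \<ge> 1" and x: "sorted_unit x n" and y: "sorted_unit y n" and \<sigma>: "\<sigma> permutes {1..n}"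
  define x' where "x' i = N (x (reflection n i))" for i
  define y' where "y' i = N (y (reflection n i))" for i
  define conjugate where "conjugate \<rho> i = reflection n (\<rho> (reflection n i))" for \<rho> i
  have x': "sorted_unit x' n" and y': "sorted_unit y' n"
    unfolding x'_def y'_def using N x y by (blast intro: sorted_unit_negation_reflection)+
  have conjugate_permutes: "conjugate \<rho> permutes {1..n}" if "\<rho> permutes {1..n}" for \<rho>
    using permutes_compose[OF permutes_compose[OF reflection_permutes that] reflection_permutes]
    unfolding conjugate_def comp_def .
  have conjugate_reflection: "conjugate (reflection n) = reflection n"
    and conjugate_id: "conjugate id = id"
    by (auto simp: conjugate_def)
  let ?P = "paired_bigop A B x' y'" and ?Q = "paired_bigop A' B' x y"
  have transfer: "N (?P (conjugate \<rho>) n) = ?Q \<rho> n" if "\<rho> permutes {1..n}" for \<rho>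
    unfolding x'_def y'_def conjugate_def
    by (rule negation_paired_bigop[OF A B N N_inv NA NB x y that n])
  have closed: "?P \<rho> n \<in> {0..1}" if "\<rho> permutes {1..n}" for \<rho>
    by (rule paired_bigop_closed[OF unit_comm_semigroup_closed[OF A] B x' y' that n])
  have "le (?P (reflection n) n) (?P (conjugate \<sigma>) n) \<and> le (?P (conjugate \<sigma>) n) (?P id n)"
    using R x' y' conjugate_permutes[OF \<sigma>] n unfolding rearrangement_def by blast
  then have "le' (N (?P (conjugate (reflection n)) n)) (N (?P (conjugate \<sigma>) n)) \<and>
      le' (N (?P (conjugate \<sigma>) n)) (N (?P (conjugate id) n))"
    unfolding conjugate_reflection conjugate_id
    using le closed[OF reflection_permutes] closed[OF conjugate_permutes[OF \<sigma>]] closed[OF permutes_id]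
    by blast
  then show "le' (?Q (reflection n) n) (?Q \<sigma> n) \<and> le' (?Q \<sigma> n) (?Q id n)"
    unfolding transfer[OF reflection_permutes] transfer[OF \<sigma>] transfer[OF permutes_id] .
qed

lemma unit_comm_semigroup_Phi:
  assumes f: "unit_comm_semigroup f" and N: "negation N" and N_inv: "\<forall>a\<in>{0..1}. N (N a) = a"
  shows "unit_comm_semigroup (Phi N f)"
  unfolding unit_comm_semigroup_def unit_closed_def
proof (intro conjI ballI)
  note N_closed = negation_closed[OF N] and f_closed = unit_closedD[OF unit_comm_semigroup_closed[OF f]]
  fix a b c :: real assume a: "a \<in> {0..1}" and b: "b \<in> {0..1}"
  show "Phi N f a b \<in> {0..1}"
    unfolding Phi_def by (intro N_closed f_closed a b)
  show "Phi N f a b = Phi N f b a"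
    unfolding Phi_def by (simp add: unit_comm_semigroup_commute[OF f N_closed[OF a] N_closed[OF b]])
  assume c: "c \<in> {0..1}"
  have ab: "f (N a) (N b) \<in> {0..1}" and bc: "f (N b) (N c) \<in> {0..1}"
    by (intro N_closed f_closed a b c)+
  have "Phi N f (Phi N f a b) c = N (f (f (N a) (N b)) (N c))"
    unfolding Phi_def using N_inv ab by simp
  also have "\<dots> = N (f (N a) (f (N b) (N c)))"
    using unit_comm_semigroup_assoc[OF f N_closed[OF a] N_closed[OF b] N_closed[OF c]] by simp
  also have "\<dots> = Phi N f a (Phi N f b c)"
    unfolding Phi_def using N_inv bc by simp
  finally show "Phi N f (Phi N f a b) c = Phi N f a (Phi N f b c)" .
qed

lemma negation_Phi:
  assumes f: "unit_closed f" and N: "negation N" and N_inv: "\<forall>a\<in>{0..1}. N (N a) = a"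
    and "a \<in> {0..1}" "b \<in> {0..1}"
  shows "N (Phi N f a b) = f (N a) (N b)"
proof -
  have "f (N a) (N b) \<in> {0..1}"
    using assms(4,5) by (intro unit_closedD[OF f] negation_closed[OF N])
  then show ?thesis using N_inv by (simp add: Phi_def)
qed

theorem corollary1:
  fixes U :: "real \<Rightarrow> real \<Rightarrow> real" and N :: "real \<Rightarrow> real"
  assumes "uninorm U" and "strong_negation N"
  shows "rearrangement_ineq U (Phi N U) \<longleftrightarrow> dual_rearrangement_ineq U (Phi N U)"
proof -
  have N: "negation N" and N_inv: "\<forall>a\<in>{0..1}. N (N a) = a"
    using assms(2) unfolding strong_negation_def by blast+
  have U: "unit_comm_semigroup U"
    using assms(1) by (rule unit_comm_semigroup_uninorm)
  have V: "unit_comm_semigroup (Phi N U)"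
    using U N N_inv by (rule unit_comm_semigroup_Phi)
  have NU: "\<forall>a\<in>{0..1}. \<forall>b\<in>{0..1}. N (U a b) = Phi N U (N a) (N b)"
    using N_inv by (simp add: Phi_def)
  have NV: "\<forall>a\<in>{0..1}. \<forall>b\<in>{0..1}. N (Phi N U a b) = U (N a) (N b)"
    using negation_Phi[OF unit_comm_semigroup_closed[OF U] N N_inv] by blast
  have "rearrangement (\<le>) (Phi N U) U \<longleftrightarrow> rearrangement (\<ge>) U (Phi N U)"
    using rearrangement_negation[OF V unit_comm_semigroup_closed[OF U] N N_inv NV NU, of "(\<le>)" "(\<ge>)"]
      rearrangement_negation[OF U unit_comm_semigroup_closed[OF V] N N_inv NU NV, of "(\<ge>)" "(\<le>)"]
      negation_antitone[OF N] by blast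
  then show ?thesis
    by (simp add: rearrangement_ineq_iff dual_rearrangement_ineq_iff)
qed

end
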